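(* Let $p$ be an odd prime, $\alpha>1$ an integer with $\gcd(p,\alpha)=1$, $\gamma=\operatorname{ord}_p(\alpha)$, and let $s,t\geq 0$ be integers. Then $$S_p^1(s\gamma p^t)\leq s\,\theta\left(\frac{p+1}{2}\right)^t .$$
   Context: A base-$p$ digit $d\in\{0,\dots,p-1\}$ is called small if $d<p/2$ and large otherwise. Let $\delta=\{\alpha^j \bmod p : j\in\mathbb{Z}\}$ be the set of residues in $\{0,\dots,p-1\}$ generated by $\alpha$ modulo $p$, and $\theta=\#\{x\in\delta: 0\le x<p/2\}$ the number of small residues in $\delta$. For integers $a,n\ge1$, $S_p^n(a)=\#\{0\le s<a : \text{the base-}p\text{ representation of }\alpha^s\text{ contains fewer than } n \text{ large digits}\}$ (this depends on the fixed $\alpha$). *)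

theory Defs
  imports Complex_Main "HOL-Number_Theory.Number_Theory"
begin

fun base_digits :: "nat \<Rightarrow> nat \<Rightarrow> nat list" where
  "base_digits b n = (if b < 2 \<or> n = 0 then [] else n mod b # base_digits b (n div b))"

definition large_digit :: "nat \<Rightarrow> nat \<Rightarrow> bool" where
  "large_digit p d \<longleftrightarrow> real d \<ge> real p / 2"

definition num_large_digits :: "nat \<Rightarrow> nat \<Rightarrow> nat" where
  "num_large_digits p n = length (filter (large_digit p) (base_digits p n))"

(* delta = { alpha^j mod p : j \<in> Z }, negative powers being modular inverses *)
definition delta_set :: "nat \<Rightarrow> nat \<Rightarrow> nat set" where
  "delta_set p \<alpha> = {x. x < p \<and> (\<exists>j::int.
      (if j \<ge> 0 then [\<alpha> ^ nat j = x] (mod p) else [x * \<alpha> ^ nat (- j) = 1] (mod p)))}"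

definition theta :: "nat \<Rightarrow> nat \<Rightarrow> nat" where
  "theta p \<alpha> = card {x \<in> delta_set p \<alpha>. real x < real p / 2}"

definition S_count :: "nat \<Rightarrow> nat \<Rightarrow> nat \<Rightarrow> nat \<Rightarrow> nat" where
  "S_count p \<alpha> n a = card {s. s < a \<and> num_large_digits p (\<alpha> ^ s) < n}"

end

theory Submission
  imports Defs
begin

(* Write \<alpha>^\<gamma> = 1 + p^e u with e \<ge> 1 and p not dividing u. Lifting the exponent,
   (1 + p^e u)^(p^j) = 1 + p^(e+j) w with w = u (mod p), so \<alpha> has order \<gamma> p^t modulo p^(e+t).
   Hence an exponent k < s \<gamma> p^t is determined by k div (\<gamma> p^t) and by the base-p digits
   0, ..., e+t-1 of \<alpha>^k. The lowest e of these digits depend only on k mod \<gamma>, and the lowest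
   one, \<alpha>^k mod p, must be small, which leaves at most \<theta> choices; each of the t digits at
   positions e, ..., e+t-1 must be small as well, which leaves (p+1)/2 choices for each. *)

lemma one_plus_prime_power_pow_prime:
  fixes p a w :: nat
  assumes p: "prime p" "odd p" and a: "a \<ge> 1"
  shows "\<exists>w'. (1 + p^a * w)^p = 1 + p^(a+1) * w' \<and> [w' = w] (mod p)"
proof -
  have p2: "p > 2" using p prime_gt_1_nat[of p] by (cases "p = 2") auto
  define f where "f i = (p choose i) * w ^ i * p ^ (i * a)" for i
  have binomial: "(1 + p^a * w)^p = (\<Sum>i\<le>p. f i)"
    unfolding f_def by (subst add.commute, subst binomial)
      (simp_all add: mult_ac power_mult_distrib power_mult [symmetric])
  have high_terms: "p^(a+2) dvd f i" if "i \<in> {2..p}" for i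
  proof (cases "i = 2")
    case True
    \<comment> \<open>the only place where p must be odd: then p divides p choose 2 = p (p - 1) / 2\<close>
    have "f i = (p - 1) div 2 * w\<^sup>2 * p ^ (2 * a + 1)"
      using choose_two[of p] True \<open>odd p\<close> by (auto simp: f_def algebra_simps elim!: oddE)
    also have "p ^ (a+2) dvd \<dots>"
      using a by (intro dvd_mult le_imp_power_dvd) auto
    finally show ?thesis .
  next
    case False
    with that have "3 \<le> i" by auto
    have "a + 2 \<le> 3 * a" using a by simp
    also have "\<dots> \<le> i * a" using \<open>3 \<le> i\<close> by (intro mult_right_mono) auto
    finally have "a + 2 \<le> i * a" .
    then show ?thesis unfolding f_def by (intro dvd_mult le_imp_power_dvd)
  qed
  define c where "c = (\<Sum>i\<in>{2..p}. f i div p^(a+2))"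
  have "{..p} = {0,1} \<union> {2..p}" using p2 by auto
  then have "(\<Sum>i\<le>p. f i) = f 0 + f 1 + (\<Sum>i\<in>{2..p}. f i)"
    by (simp add: sum.union_disjoint)
  with binomial have "(1 + p^a * w)^p = f 0 + f 1 + (\<Sum>i\<in>{2..p}. f i)"
    by (simp only:)
  also have "(\<Sum>i\<in>{2..p}. f i) = p^(a+2) * c"
    unfolding c_def sum_distrib_left using high_terms by (intro sum.cong) auto
  also have "f 0 + f 1 + p^(a+2) * c = 1 + p^(a+1) * (w + p * c)"
    by (simp add: f_def algebra_simps)
  finally have "(1 + p^a * w)^p = 1 + p^(a+1) * (w + p * c)" .
  moreover have "[w + p * c = w] (mod p)"
    by (simp add: cong_def)
  ultimately show ?thesis by blast
qed

lemma one_plus_prime_power_pow_prime_power: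
  fixes p e u j :: nat
  assumes p: "prime p" "odd p" and e: "e \<ge> 1"
  shows "\<exists>w. (1 + p^e * u)^(p^j) = 1 + p^(e+j) * w \<and> [w = u] (mod p)"
proof (induction j)
  case 0
  show ?case by auto
next
  case (Suc j)
  then obtain w where w: "(1 + p^e * u)^(p^j) = 1 + p^(e+j) * w" "[w = u] (mod p)"
    by blast
  obtain w' where w': "(1 + p^(e+j) * w)^p = 1 + p^(e+j+1) * w'" "[w' = w] (mod p)"
    using one_plus_prime_power_pow_prime[OF p, of "e+j" w] e by auto
  have "(1 + p^e * u)^(p^Suc j) = ((1 + p^e * u)^(p^j))^p"
    by (simp add: power_mult[symmetric] mult.commute)
  also have "\<dots> = 1 + p^(e + Suc j) * w'"
    using w(1) w'(1) by simp
  finally show ?case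
    using cong_trans[OF w'(2) w(2)] by blast
qed

lemma one_plus_prime_power_cong_one_iff:
  fixes p k n w :: nat
  assumes "prime p" and "\<not> p dvd w"
  shows "[1 + p^k * w = 1] (mod p^n) \<longleftrightarrow> n \<le> k"
proof -
  have "coprime (p^n) w"
    using assms by (simp add: prime_imp_coprime)
  then have "p^n dvd p^k * w \<longleftrightarrow> p^n dvd p^k"
    by (simp add: coprime_dvd_mult_left_iff)
  also have "\<dots> \<longleftrightarrow> n \<le> k"
    using assms(1) by (simp add: dvd_power_iff_le prime_ge_2_nat)
  finally show ?thesis
    using cong_add_lcancel_0_nat[of 1 "p^k * w" "p^n"] by (simp add: cong_0_iff)
qed

lemma ord_one_plus_prime_power:
  fixes p e u t :: nat
  assumes p: "prime p" "odd p" and e: "e \<ge> 1" and u: "\<not> p dvd u"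
  shows "ord (p^(e+t)) (1 + p^e * u) = p^t"
proof -
  have pow_cong_one_iff: "[(1 + p^e * u)^(p^j) = 1] (mod p^(e+t)) \<longleftrightarrow> t \<le> j" for j
  proof -
    obtain w where w: "(1 + p^e * u)^(p^j) = 1 + p^(e+j) * w" "[w = u] (mod p)"
      using one_plus_prime_power_pow_prime_power[OF p e] by blast
    have "\<not> p dvd w"
      using u w(2) by (simp add: cong_dvd_iff)
    then show ?thesis
      using one_plus_prime_power_cong_one_iff[OF p(1)] w(1) by simp
  qed
  then have "ord (p^(e+t)) (1 + p^e * u) dvd p^t"
    by (simp add: ord_divides')
  then obtain b where b: "b \<le> t" "ord (p^(e+t)) (1 + p^e * u) = p^b"
    using divides_primepow_nat[OF p(1)] by auto
  with pow_cong_one_iff[of b] have "b = t"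
    by (simp add: ord_divides')
  with b show ?thesis by simp
qed

lemma pow_ord_eq_one_plus_prime_power:
  fixes p \<alpha> :: nat
  assumes "prime p" and "coprime p \<alpha>" and "\<alpha> > 1"
  obtains e u where "e \<ge> 1" "\<not> p dvd u" "\<alpha>^(ord p \<alpha>) = 1 + p^e * u"
proof -
  have "ord p \<alpha> > 0"
    using assms(2) by simp
  with assms(3) have "\<alpha>^(ord p \<alpha>) > 1"
    by (rule one_less_power)
  moreover have "[\<alpha>^(ord p \<alpha>) = 1] (mod p)"
    by (rule ord)
  ultimately obtain v where v: "\<alpha>^(ord p \<alpha>) = 1 + p * v" "v \<noteq> 0"
    using cong_le_nat[of 1 "\<alpha>^(ord p \<alpha>)" p] by (auto simp: mult.commute)
  obtain u where u: "v = p ^ multiplicity p v * u" "\<not> p dvd u"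
    using multiplicity_decompose'[OF v(2)] assms(1) by (metis not_prime_unit)
  have "\<alpha>^(ord p \<alpha>) = 1 + p^(Suc (multiplicity p v)) * u"
    using v(1) u(1) by (simp add: mult.assoc)
  with u(2) show ?thesis
    by (intro that[of "Suc (multiplicity p v)" u]) simp_all
qed

lemma ord_prime_power_modulus:
  fixes p \<alpha> e u t :: nat
  assumes p: "prime p" "odd p" and e: "e \<ge> 1" and u: "\<not> p dvd u"
    and lift: "\<alpha>^(ord p \<alpha>) = 1 + p^e * u"
  shows "ord (p^(e+t)) \<alpha> = ord p \<alpha> * p^t"
proof -
  define N where "N = p^(e+t)"
  have "coprime p \<alpha>"
  proof (rule ccontr)
    assume "\<not> coprime p \<alpha>"
    then have "u = 0" using lift p(1) by (simp add: prime_gt_0_nat)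
    with u show False by simp
  qed
  then have cop: "coprime N \<alpha>"
    unfolding N_def by simp
  have "p dvd N"
    unfolding N_def using e by simp
  then have "[\<alpha>^(ord N \<alpha>) = 1] (mod p)"
    using ord cong_dvd_modulus_nat by blast
  then have dvd: "ord p \<alpha> dvd ord N \<alpha>"
    by (simp add: ord_divides')
  have "ord N \<alpha> div ord p \<alpha> = ord N (\<alpha>^(ord p \<alpha>))"
    using ord_power[OF cop, of "ord p \<alpha>"] dvd by (simp add: gcd_nat.absorb1)
  also have "\<dots> = p^t"
    unfolding N_def lift by (rule ord_one_plus_prime_power[OF p e u])
  finally show ?thesis
    using dvd unfolding N_def by (metis dvd_mult_div_cancel)
qed

declare base_digits.simps[simp del]

definition digit :: "nat \<Rightarrow> nat \<Rightarrow> nat \<Rightarrow> nat" where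
  "digit p n i = n div p^i mod p"

lemma digit_mem_base_digits:
  assumes "p \<ge> 2" and "digit p n i \<noteq> 0"
  shows "digit p n i \<in> set (base_digits p n)"
  using assms
proof (induction p n arbitrary: i rule: base_digits.induct)
  case (1 p n)
  from "1.prems"(2) have "n \<noteq> 0"
    by (cases "n = 0") (simp_all add: digit_def)
  with "1.prems"(1) have digits: "base_digits p n = n mod p # base_digits p (n div p)"
    by (subst base_digits.simps) simp
  show ?case
  proof (cases i)
    case 0
    then show ?thesis by (simp add: digit_def digits)
  next
    case (Suc j)
    then have "digit p n i = digit p (n div p) j"
      by (simp add: digit_def div_mult2_eq)
    with "1.IH"[of j] "1.prems" \<open>n \<noteq> 0\<close> show ?thesis
      by (simp add: digits)
  qed
qed

lemma digit_small_if_no_large_digits: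
  assumes "p \<ge> 2" and "num_large_digits p n = 0"
  shows "2 * digit p n i < p"
proof (cases "digit p n i = 0")
  case False
  have "digit p n i \<in> set (base_digits p n)"
    using assms(1) False by (rule digit_mem_base_digits)
  moreover have "\<forall>d\<in>set (base_digits p n). \<not> large_digit p d"
    using assms(2) by (simp add: num_large_digits_def filter_empty_conv)
  ultimately show ?thesis
    by (auto simp: large_digit_def)
qed (use assms(1) in simp)

lemma digit_mod_power:
  assumes "p > 0" and "i < m"
  shows "digit p (n mod p^m) i = digit p n i"
proof -
  have m: "p^m = p^i * p^(m-i)"
    using assms by (simp add: power_add[symmetric])
  have "n mod p^m div p^i = n div p^i mod p^(m-i)"
    unfolding m mod_mult2_eq using assms by simp
  moreover have "p dvd p^(m-i)"
    using assms by simp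
  ultimately show ?thesis
    unfolding digit_def by (simp add: mod_mod_cancel)
qed

lemma mod_power_eq_iff_digits_eq:
  assumes "p > 0"
  shows "a mod p^m = b mod p^m \<longleftrightarrow> (\<forall>i<m. digit p a i = digit p b i)"
proof
  show "\<forall>i<m. digit p a i = digit p b i" if "a mod p^m = b mod p^m"
    using digit_mod_power[OF assms] that by metis
next
  show "a mod p^m = b mod p^m" if "\<forall>i<m. digit p a i = digit p b i"
    using that
  proof (induction m arbitrary: a b)
    case (Suc m)
    have "a mod p = b mod p"
      using Suc.prems[rule_format, of 0] by (simp add: digit_def)
    moreover have "\<forall>i<m. digit p (a div p) i = digit p (b div p) i"
      using Suc.prems by (auto simp: digit_def div_mult2_eq[symmetric] simp flip: power_Suc)
    then have "a div p mod p^m = b div p mod p^m"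
      by (rule Suc.IH)
    ultimately show ?case
      by (simp add: mod_mult2_eq)
  qed simp
qed

lemma cong_pow_mod_exponent:
  fixes a n m k :: nat
  assumes "[a^n = 1] (mod m)"
  shows "[a^k = a^(k mod n)] (mod m)"
proof -
  have "a^k = a^(n * (k div n) + k mod n)"
    by simp
  also have "\<dots> = (a^n)^(k div n) * a^(k mod n)"
    by (simp only: power_add power_mult)
  also have "[\<dots> = 1^(k div n) * a^(k mod n)] (mod m)"
    by (intro cong_mult cong_pow assms cong_refl)
  finally show ?thesis by simp
qed

lemma card_small_residue_exponents_le_theta:
  fixes p \<alpha> :: nat
  assumes "p > 1" and "coprime p \<alpha>"
  shows "card {r. r < ord p \<alpha> \<and> 2 * (\<alpha>^r mod p) < p} \<le> theta p \<alpha>"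
  unfolding theta_def
proof (rule card_inj_on_le)
  let ?R = "{r. r < ord p \<alpha> \<and> 2 * (\<alpha>^r mod p) < p}"
  show "inj_on (\<lambda>r. \<alpha>^r mod p) ?R"
  proof (rule inj_onI)
    fix x y assume "x \<in> ?R" "y \<in> ?R" and "\<alpha>^x mod p = \<alpha>^y mod p"
    then have "[x = y] (mod ord p \<alpha>)"
      using order_divides_expdiff[OF assms(2)] by (simp add: cong_def)
    with \<open>x \<in> ?R\<close> \<open>y \<in> ?R\<close> show "x = y"
      using cong_less_modulus_unique_nat by auto
  qed
  have "\<alpha>^r mod p \<in> delta_set p \<alpha>" for r
    unfolding delta_set_def using assms(1)
    by (auto intro!: exI[of _ "int r"] simp: cong_def)
  then show "(\<lambda>r. \<alpha>^r mod p) ` ?R \<subseteq> {x \<in> delta_set p \<alpha>. real x < real p / 2}"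
    by auto
  show "finite {x \<in> delta_set p \<alpha>. real x < real p / 2}"
    by (rule finite_subset[of _ "{..<p}"]) (auto simp: delta_set_def)
qed

lemma exponent_cong_if_residue_and_digits_eq:
  fixes p \<alpha> e t k1 k2 :: nat
  assumes p: "p \<ge> 2" and cop: "coprime p \<alpha>"
    and low: "[\<alpha>^(ord p \<alpha>) = 1] (mod p^e)"
    and ord_lift: "ord (p^(e+t)) \<alpha> = ord p \<alpha> * p^t"
    and res: "k1 mod ord p \<alpha> = k2 mod ord p \<alpha>"
    and high: "\<forall>i<t. digit p (\<alpha>^k1) (e+i) = digit p (\<alpha>^k2) (e+i)"
  shows "[k1 = k2] (mod ord p \<alpha> * p^t)"
proof -
  have "[\<alpha>^k1 = \<alpha>^(k1 mod ord p \<alpha>)] (mod p^e)" "[\<alpha>^k2 = \<alpha>^(k2 mod ord p \<alpha>)] (mod p^e)"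
    using cong_pow_mod_exponent[OF low] by blast+
  then have "\<alpha>^k1 mod p^e = \<alpha>^k2 mod p^e"
    using res by (simp add: cong_def)
  then have "\<forall>i<e. digit p (\<alpha>^k1) i = digit p (\<alpha>^k2) i"
    using p by (simp add: mod_power_eq_iff_digits_eq)
  with high have "\<forall>i<e+t. digit p (\<alpha>^k1) i = digit p (\<alpha>^k2) i"
    by (metis add_diff_inverse_nat add_less_cancel_left)
  then have "[\<alpha>^k1 = \<alpha>^k2] (mod p^(e+t))"
    using p by (simp add: mod_power_eq_iff_digits_eq cong_def)
  then show ?thesis
    using order_divides_expdiff[of "p^(e+t)" \<alpha>] cop ord_lift by simp
qed

lemma S_count_le_small_residue_exponents:
  fixes p \<alpha> e s t :: nat
  assumes p: "p \<ge> 2" and cop: "coprime p \<alpha>"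
    and low: "[\<alpha>^(ord p \<alpha>) = 1] (mod p^e)"
    and ord_lift: "ord (p^(e+t)) \<alpha> = ord p \<alpha> * p^t"
  shows "S_count p \<alpha> 1 (s * ord p \<alpha> * p^t)
           \<le> s * card {r. r < ord p \<alpha> \<and> 2 * (\<alpha>^r mod p) < p} * ((p+1) div 2)^t"
proof -
  define \<gamma> where "\<gamma> = ord p \<alpha>"
  define M where "M = \<gamma> * p^t"
  define R where "R = {r. r < \<gamma> \<and> 2 * (\<alpha>^r mod p) < p}"
  define D where "D = PiE {..<t} (\<lambda>_. {..<(p+1) div 2})"
  define S where "S = {k. k < s * M \<and> num_large_digits p (\<alpha>^k) < 1}"
  define code where "code k = (k div M, k mod \<gamma>, \<lambda>i\<in>{..<t}. digit p (\<alpha>^k) (e+i))" for k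
  have small: "2 * digit p (\<alpha>^k) i < p" if "k \<in> S" for k i
    using that p by (intro digit_small_if_no_large_digits) (auto simp: S_def)
  have "code ` S \<subseteq> {..<s} \<times> R \<times> D"
  proof (rule image_subsetI)
    fix k assume k: "k \<in> S"
    have "k div M < s"
      using k by (simp add: S_def less_mult_imp_div_less)
    moreover have "[\<alpha>^k = \<alpha>^(k mod \<gamma>)] (mod p)"
      unfolding \<gamma>_def by (rule cong_pow_mod_exponent[OF ord])
    then have "k mod \<gamma> \<in> R"
      using small[OF k, of 0] cop by (simp add: R_def \<gamma>_def digit_def cong_def)
    moreover have "2 * d < p \<Longrightarrow> d < (p+1) div 2" for d
      by presburger
    then have "(\<lambda>i\<in>{..<t}. digit p (\<alpha>^k) (e+i)) \<in> D"
      using small[OF k] by (simp add: D_def)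
    ultimately show "code k \<in> {..<s} \<times> R \<times> D"
      by (simp add: code_def)
  qed
  moreover have "inj_on code S"
  proof (rule inj_onI)
    fix k1 k2 assume "k1 \<in> S" "k2 \<in> S" "code k1 = code k2"
    then have "k1 div M = k2 div M" and "k1 mod \<gamma> = k2 mod \<gamma>"
      and "\<forall>i<t. digit p (\<alpha>^k1) (e+i) = digit p (\<alpha>^k2) (e+i)"
      by (auto simp: code_def fun_eq_iff) (metis lessThan_iff restrict_apply')
    with exponent_cong_if_residue_and_digits_eq[OF p cop low ord_lift] show "k1 = k2"
      unfolding M_def \<gamma>_def by (metis cong_def div_mult_mod_eq)
  qed
  ultimately have "card S \<le> card ({..<s} \<times> R \<times> D)"
    by (intro card_inj_on_le) (simp_all add: R_def D_def finite_PiE)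
  also have "\<dots> = s * card R * ((p+1) div 2)^t"
    by (simp add: D_def card_cartesian_product card_PiE)
  finally show ?thesis
    by (simp add: S_count_def S_def M_def R_def \<gamma>_def mult.assoc)
qed

theorem lemma2p5:
  fixes p \<alpha> s t :: nat
  assumes "prime p" and "odd p" and "\<alpha> > 1" and "gcd p \<alpha> = 1"
  shows "real (S_count p \<alpha> 1 (s * ord p \<alpha> * p ^ t))
           \<le> real s * real (theta p \<alpha>) * ((real p + 1) / 2) ^ t"
proof -
  have cop: "coprime p \<alpha>"
    using assms(4) coprime_iff_gcd_eq_1 by blast
  have half: "real ((p+1) div 2) = (real p + 1) / 2"
    using assms(2) by (subst real_of_nat_div) auto
  obtain e u where e: "e \<ge> 1" and u: "\<not> p dvd u" and lift: "\<alpha>^(ord p \<alpha>) = 1 + p^e * u"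
    using pow_ord_eq_one_plus_prime_power[OF assms(1) cop assms(3)] .
  have "[\<alpha>^(ord p \<alpha>) = 1] (mod p^e)"
    using one_plus_prime_power_cong_one_iff[OF assms(1) u, of e e] lift by simp
  moreover have "ord (p^(e+t)) \<alpha> = ord p \<alpha> * p^t"
    using ord_prime_power_modulus[OF assms(1,2) e u lift] .
  ultimately have "S_count p \<alpha> 1 (s * ord p \<alpha> * p^t)
      \<le> s * card {r. r < ord p \<alpha> \<and> 2 * (\<alpha>^r mod p) < p} * ((p+1) div 2)^t"
    using prime_ge_2_nat[OF assms(1)] cop by (intro S_count_le_small_residue_exponents)
  also have "\<dots> \<le> s * theta p \<alpha> * ((p+1) div 2)^t"
    using card_small_residue_exponents_le_theta[OF prime_gt_1_nat[OF assms(1)] cop]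
    by (intro mult_right_mono mult_left_mono) auto
  finally have "real (S_count p \<alpha> 1 (s * ord p \<alpha> * p^t))
      \<le> real s * real (theta p \<alpha>) * real ((p+1) div 2) ^ t"
    by (metis of_nat_le_iff of_nat_mult of_nat_power)
  then show ?thesis
    by (simp only: half)
qed

end
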